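(* Let $(X,\tau_1,\tau_2)$ be a bitopological space which is a $j$-$P$-space, $i,j\in\{1,2\}$, $i\ne j$. Let $\{U_\alpha:\alpha\in\Delta\}$ be a family of $(i,j)$-regular open sets and let $\{V_\lambda:\lambda\in\Lambda\}$ be a family of $i$-open sets which refines $\{U_\alpha\}$ and is $j$-locally countable. Then $\{i\text{-}\mathrm{int}(j\text{-}\mathrm{cl}(V_\lambda)):\lambda\in\Lambda\}$ is a family of $\tau^s_{(i,j)}$-open sets which refines $\{U_\alpha:\alpha\in\Delta\}$ and is locally countable with respect to $\tau^s_{(j,i)}$ (i.e. every point has a $\tau^s_{(j,i)}$-open neighbourhood meeting at most countably many of its members).
   Context: $(X,\tau_1,\tau_2)$ is a bitopological space and $i,j\in\{1,2\}$, $i\neq j$. For $k\in\{1,2\}$, $k\text{-}\mathrm{int}$, $k\text{-}\mathrm{cl}$ denote interior and closure with respect to $\tau_k$; "$k$-open" means $\tau_k$-open. A set $A$ is $(i,j)$-regular open if $A=i\text{-}\mathrm{int}(j\text{-}\mathrm{cl}(A))$. The pairwise semiregularization of $(X,\tau_1,\tau_2)$ is $(X,\tau^s_{(1,2)},\tau^s_{(2,1)})$, where $\tau^s_{(i,j)}$ is the topology on $X$ having as a base the family of all $(i,j)$-regular open sets of $(X,\tau_1,\tau_2)$. A family $\mathcal V$ refines $\mathcal U$ if each member of $\mathcal V$ is contained in some member of $\mathcal U$. A family $\mathcal V$ is $k$-locally countable if every $x\in X$ has a $k$-open neighbourhood meeting at most countably many members of $\mathcal V$. $X$ is a $k$-$P$-space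 if every intersection of countably many $k$-open sets is $k$-open. *)

theory Defs
  imports "HOL-Analysis.Analysis"
begin

text \<open>A bitopological space is modelled by two topologies Ti, Tj with the same
  carrier (topspace). Ti plays the role of tau_i, Tj the role of tau_j.\<close>

definition pairwise_regular_open :: "'a topology \<Rightarrow> 'a topology \<Rightarrow> 'a set \<Rightarrow> bool" where
  "pairwise_regular_open Ti Tj A \<longleftrightarrow> A = Ti interior_of (Tj closure_of A)"

text \<open>tau^s_(i,j): the topology having the (i,j)-regular open sets as a base
  (generated by them; they form a base since they cover X and are closed
  under finite intersections).\<close>
definition pairwise_semireg :: "'a topology \<Rightarrow> 'a topology \<Rightarrow> 'a topology" where
  "pairwise_semireg Ti Tj = topology_generated_by {A. pairwise_regular_open Ti Tj A}"

definition refines_fam :: "'c set \<Rightarrow> ('c \<Rightarrow> 'a set) \<Rightarrow> 'b set \<Rightarrow> ('b \<Rightarrow> 'a set) \<Rightarrow> bool" where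
  "refines_fam \<Lambda> V \<Delta> U \<longleftrightarrow> (\<forall>l\<in>\<Lambda>. \<exists>a\<in>\<Delta>. V l \<subseteq> U a)"

definition locally_countable_fam :: "'a topology \<Rightarrow> 'c set \<Rightarrow> ('c \<Rightarrow> 'a set) \<Rightarrow> bool" where
  "locally_countable_fam T \<Lambda> V \<longleftrightarrow>
     (\<forall>x\<in>topspace T. \<exists>W. openin T W \<and> x \<in> W \<and> countable {l\<in>\<Lambda>. V l \<inter> W \<noteq> {}})"

definition P_space :: "'a topology \<Rightarrow> bool" where
  "P_space T \<longleftrightarrow> (\<forall>\<F>. countable \<F> \<and> \<F> \<noteq> {} \<and> (\<forall>S\<in>\<F>. openin T S) \<longrightarrow> openin T (\<Inter>\<F>))"

end

theory Submission
  imports Defs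
begin

text \<open>Every set of the form i-int(j-cl S) is (i,j)-regular open, hence a basic open set of
  the semiregularization, and monotonicity of i-int(j-cl) carries the refinement into the regular
  open sets U. For local countability, a j-open W meeting countably many V is replaced by the
  (j,i)-regular open set j-int(i-cl W) containing it: if V and W are disjoint then so are
  i-int(j-cl V) and j-int(i-cl W), since an open set misses a set iff it misses its closure.\<close>

lemma pairwise_regular_open_interior_closure:
  assumes "topspace Ti = topspace Tj"
  shows "pairwise_regular_open Ti Tj (Ti interior_of (Tj closure_of S))"
  unfolding pairwise_regular_open_def
proof
  let ?G = "Ti interior_of (Tj closure_of S)"
  have "Tj closure_of ?G \<subseteq> Tj closure_of S"
    by (metis closure_of_closure_of closure_of_mono interior_of_subset)
  then show "Ti interior_of (Tj closure_of ?G) \<subseteq> ?G"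
    by (rule interior_of_mono)
  have "?G \<subseteq> topspace Tj"
    using interior_of_subset_topspace assms by metis
  then show "?G \<subseteq> Ti interior_of (Tj closure_of ?G)"
    by (simp add: closure_of_subset interior_of_maximal)
qed

lemma openin_pairwise_semireg_interior_closure:
  assumes "topspace Ti = topspace Tj"
  shows "openin (pairwise_semireg Ti Tj) (Ti interior_of (Tj closure_of S))"
  unfolding pairwise_semireg_def
  by (rule topology_generated_by_Basis)
    (simp add: pairwise_regular_open_interior_closure[OF assms])

lemma topspace_pairwise_semireg_subset: "topspace (pairwise_semireg Ti Tj) \<subseteq> topspace Ti"
  unfolding pairwise_semireg_def topology_generated_by_topspace
proof (rule Union_least)
  fix A assume "A \<in> {A. pairwise_regular_open Ti Tj A}"
  then have "A = Ti interior_of (Tj closure_of A)"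
    by (simp add: pairwise_regular_open_def)
  then show "A \<subseteq> topspace Ti"
    by (metis interior_of_subset_topspace)
qed

lemma refines_fam_interior_closure:
  assumes "\<forall>a\<in>\<Delta>. pairwise_regular_open Ti Tj (U a)"
    and "refines_fam \<Lambda> V \<Delta> U"
  shows "refines_fam \<Lambda> (\<lambda>l. Ti interior_of (Tj closure_of (V l))) \<Delta> U"
  unfolding refines_fam_def
proof
  fix l assume "l \<in> \<Lambda>"
  then obtain a where a: "a \<in> \<Delta>" "V l \<subseteq> U a"
    using assms(2) unfolding refines_fam_def by blast
  have "Ti interior_of (Tj closure_of (V l)) \<subseteq> Ti interior_of (Tj closure_of (U a))"
    by (intro interior_of_mono closure_of_mono a(2))
  also have "\<dots> = U a"
    using assms(1) a(1) unfolding pairwise_regular_open_def by metis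
  finally show "\<exists>a\<in>\<Delta>. Ti interior_of (Tj closure_of (V l)) \<subseteq> U a"
    using a(1) by blast
qed

lemma interior_closure_Int_interior_closure_eq_empty:
  assumes "openin Tj W" and "V \<inter> W = {}"
  shows "Ti interior_of (Tj closure_of V) \<inter> Tj interior_of (Ti closure_of W) = {}"
proof -
  let ?O = "Ti interior_of (Tj closure_of V)"
  have "W \<inter> Tj closure_of V = {}"
    using openin_Int_closure_of_eq_empty[OF assms(1)] assms(2) by blast
  then have "?O \<inter> W = {}"
    using interior_of_subset[of Ti "Tj closure_of V"] by blast
  then have "?O \<inter> Ti closure_of W = {}"
    by (simp add: openin_Int_closure_of_eq_empty)
  then show ?thesis
    using interior_of_subset[of Tj "Ti closure_of W"] by blast
qed

lemma locally_countable_fam_interior_closure: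
  assumes "topspace Ti = topspace Tj"
    and "locally_countable_fam Tj \<Lambda> V"
  shows "locally_countable_fam (pairwise_semireg Tj Ti) \<Lambda> (\<lambda>l. Ti interior_of (Tj closure_of (V l)))"
  unfolding locally_countable_fam_def
proof
  fix x assume "x \<in> topspace (pairwise_semireg Tj Ti)"
  then have "x \<in> topspace Tj"
    by (rule subsetD[OF topspace_pairwise_semireg_subset])
  then obtain W where W: "openin Tj W" "x \<in> W" "countable {l\<in>\<Lambda>. V l \<inter> W \<noteq> {}}"
    using assms(2) unfolding locally_countable_fam_def by blast
  define G where "G = Tj interior_of (Ti closure_of W)"
  have met_by_G: "{l\<in>\<Lambda>. Ti interior_of (Tj closure_of (V l)) \<inter> G \<noteq> {}} \<subseteq> {l\<in>\<Lambda>. V l \<inter> W \<noteq> {}}"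
  proof
    fix l assume "l \<in> {l\<in>\<Lambda>. Ti interior_of (Tj closure_of (V l)) \<inter> G \<noteq> {}}"
    then show "l \<in> {l\<in>\<Lambda>. V l \<inter> W \<noteq> {}}"
      using interior_closure_Int_interior_closure_eq_empty[OF W(1), of "V l" Ti]
      unfolding G_def by auto
  qed
  have "W \<subseteq> topspace Ti"
    using W(1) openin_subset assms(1) by metis
  then have "x \<in> G"
    unfolding G_def using W(1,2) by (meson closure_of_subset interior_of_maximal subsetD)
  moreover have "openin (pairwise_semireg Tj Ti) G"
    unfolding G_def using openin_pairwise_semireg_interior_closure assms(1) by metis
  moreover have "countable {l\<in>\<Lambda>. Ti interior_of (Tj closure_of (V l)) \<inter> G \<noteq> {}}"
    using met_by_G W(3) by (rule countable_subset)
  ultimately show "\<exists>G. openin (pairwise_semireg Tj Ti) G \<and> x \<in> G \<and>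
      countable {l\<in>\<Lambda>. Ti interior_of (Tj closure_of (V l)) \<inter> G \<noteq> {}}"
    by blast
qed

theorem lemma2:
  fixes Ti Tj :: "'a topology"
    and U :: "'b \<Rightarrow> 'a set" and \<Delta> :: "'b set"
    and V :: "'c \<Rightarrow> 'a set" and \<Lambda> :: "'c set"
  assumes "topspace Ti = topspace Tj"
    and "P_space Tj"
    and "\<forall>a\<in>\<Delta>. pairwise_regular_open Ti Tj (U a)"
    and "\<forall>l\<in>\<Lambda>. openin Ti (V l)"
    and "refines_fam \<Lambda> V \<Delta> U"
    and "locally_countable_fam Tj \<Lambda> V"
  shows "(\<forall>l\<in>\<Lambda>. openin (pairwise_semireg Ti Tj) (Ti interior_of (Tj closure_of (V l))))
    \<and> refines_fam \<Lambda> (\<lambda>l. Ti interior_of (Tj closure_of (V l))) \<Delta> U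
    \<and> locally_countable_fam (pairwise_semireg Tj Ti) \<Lambda> (\<lambda>l. Ti interior_of (Tj closure_of (V l)))"
  using openin_pairwise_semireg_interior_closure[OF assms(1)]
    refines_fam_interior_closure[OF assms(3,5)]
    locally_countable_fam_interior_closure[OF assms(1,6)]
  by blast

end
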